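(* Let $w'\in\mathcal{W}^e_n$ and let $(O',E')\to(O,E)$ be one application of the step $(\omega)$ during the computation of $\Omega(w')$. Then $(O',E')$ is obtained from $(O,E)$ by applying one step $(\psi)$.
   Context: Fix a finite totally ordered alphabet $A$. Words are finite sequences over $A$; $-$ is the empty word. $<$ is lexicographic order (a proper prefix is smaller than the word); $\infty$ is a formal symbol with $w<\infty$ for all words $w$. A Lyndon word is a nonempty word strictly smaller than each of its proper nonempty suffixes. Every word has a unique Lyndon factorization $w=\ell_1\cdots\ell_m$ into Lyndon words with $\ell_1\ge\dots\ge\ell_m$, written $\ell_1|\cdots|\ell_m$. Odd/even refer to lengths. For a Lyndon word $\ell$ with $|\ell|\ge2$, its standard factorization is $\ell=rs$ with $s$ the longest proper suffix of $\ell$ that is Lyndon (equivalently the smallest proper nonempty suffix). $\mathcal{W}^e_n$: words of length $n$ whose Lyndon factors are all even except possibly one factor of length one. Iterated standard factorization (ISF) of a Lyndon word $\ell$, $|\ell|\ge2$, with respect to $u$ (a word or $\infty$): the unique factorization $\ell=r_js_js_{j-1}\cdots s_1$, $j\ge1$, such that (a) for every $i\in[j]$, $s_i$ is the smallest proper nonempty suffix of $r_js_j\cdots s_i$; (b) for $i\in[j-1]$, $s_i$ is even and $s_i<u$; (c) $s_j$ is odd or $u\le s_j$. Computation of $\Omega(w')$ for $w'\in\mathcal{W}^e_n$: start with $(O',E')=(-,w')$; if $n$ is odd, remove the unique length-one Lyndon factor from $E'$ and set $O'$ equal to that letter. While $E'$ is nonempty, apply step $(\omega)$: let $O'=o'_1|\cdots|o'_h$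 and $E'=e'_1|\cdots|e'_k$ (with $o'_h=\infty$ if $O'$ is empty). If $o'_h<e'_1$, update to (S') $(O'e'_1,\ e'_2\cdots e'_k)$. Otherwise let $e'_1=r_js_js_{j-1}\cdots s_1$ be the ISF of $e'_1$ with respect to $o'_h$ and update to (P') $(o'_1\cdots o'_{h-1}r_js_jo'_h,\ s_{j-1}\cdots s_1e'_2\cdots e'_k)$ if $o'_h\le s_j$, or to (F') $(O's_jr_j,\ s_{j-1}\cdots s_1e'_2\cdots e'_k)$ if $s_j<o'_h$. When $E'$ is empty, $\Omega(w')=O'$. Step $(\psi)$ on a pair of words $(O,E)$ with $|O|\ge2$: let $O=o_1|\cdots|o_m$ (with $o_{m-1}=\infty$ if $m=1$); $o_m$ is splittable if $|o_m|\ge2$ and its standard factorization $o_m=rs$ satisfies $s<o_{m-1}$. Update to: (S) $(o_1\cdots o_{m-1}r,\ sE)$ if splittable and $r$ odd; (P) $(o_1\cdots o_{m-1}s,\ rE)$ if splittable and $r$ even; (F) $(o_1\cdots o_{m-2},\ o_mo_{m-1}E)$ if not splittable. *)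

theory Defs
  imports Main
begin

text \<open>Words over a finite totally ordered alphabet are lists. The formal symbol
  infinity is represented by None in the type option of words.\<close>

definition wlt :: "'a::linorder list \<Rightarrow> 'a list \<Rightarrow> bool" where
  "wlt u v \<longleftrightarrow> (u, v) \<in> lexord {(a, b). a < b}"

definition wle :: "'a::linorder list \<Rightarrow> 'a list \<Rightarrow> bool" where
  "wle u v \<longleftrightarrow> wlt u v \<or> u = v"

fun w_lt_ext :: "'a::linorder list \<Rightarrow> 'a list option \<Rightarrow> bool" where
  "w_lt_ext w None = True"
| "w_lt_ext w (Some u) = wlt w u"

fun ext_lt_w :: "'a::linorder list option \<Rightarrow> 'a list \<Rightarrow> bool" where
  "ext_lt_w None w = False"
| "ext_lt_w (Some u) w = wlt u w"

fun ext_le_w :: "'a::linorder list option \<Rightarrow> 'a list \<Rightarrow> bool" where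
  "ext_le_w None w = False"
| "ext_le_w (Some u) w = wle u w"

definition lyndon :: "'a::linorder list \<Rightarrow> bool" where
  "lyndon w \<longleftrightarrow> w \<noteq> [] \<and> (\<forall>k. 0 < k \<and> k < length w \<longrightarrow> wlt w (drop k w))"

definition lyndon_factorization :: "'a::linorder list \<Rightarrow> 'a list list \<Rightarrow> bool" where
  "lyndon_factorization w fs \<longleftrightarrow>
     concat fs = w \<and> (\<forall>f\<in>set fs. lyndon f) \<and> sorted_wrt (\<lambda>x y. wle y x) fs"

definition LF :: "'a::linorder list \<Rightarrow> 'a list list" where
  "LF w = (THE fs. lyndon_factorization w fs)"

definition std_fact :: "'a::linorder list \<Rightarrow> 'a list \<Rightarrow> 'a list \<Rightarrow> bool" where
  "std_fact l r s \<longleftrightarrow> l = r @ s \<and> r \<noteq> [] \<and> lyndon s \<and>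
     (\<forall>k. 0 < k \<and> k < length l \<and> lyndon (drop k l) \<longrightarrow> length (drop k l) \<le> length s)"

definition min_proper_suffix :: "'a::linorder list \<Rightarrow> 'a list \<Rightarrow> bool" where
  "min_proper_suffix l s \<longleftrightarrow> (\<exists>k. 0 < k \<and> k < length l \<and> s = drop k l) \<and>
     (\<forall>k. 0 < k \<and> k < length l \<longrightarrow> wle s (drop k l))"

definition We :: "nat \<Rightarrow> 'a::linorder list set" where
  "We n = {w. length w = n \<and>
     (\<forall>f\<in>set (LF w). even (length f) \<or> length f = 1) \<and>
     length (filter (\<lambda>f. odd (length f)) (LF w)) \<le> 1}"

text \<open>Iterated standard factorization of l with respect to u (None = infinity):
  l = r @ concat ts where ts = [s_j, s_(j-1), ..., s_1].\<close>
definition is_ISF :: "'a::linorder list option \<Rightarrow> 'a list \<Rightarrow> 'a list \<Rightarrow> 'a list list \<Rightarrow> bool" where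
  "is_ISF u l r ts \<longleftrightarrow> 2 \<le> length l \<and> ts \<noteq> [] \<and> l = r @ concat ts \<and>
     (\<forall>i < length ts. min_proper_suffix (r @ concat (take (Suc i) ts)) (ts ! i)) \<and>
     (\<forall>i. 0 < i \<and> i < length ts \<longrightarrow> even (length (ts ! i)) \<and> w_lt_ext (ts ! i) u) \<and>
     (odd (length (ts ! 0)) \<or> ext_le_w u (ts ! 0))"

definition last_factor :: "'a::linorder list \<Rightarrow> 'a list option" where
  "last_factor w = (if LF w = [] then None else Some (last (LF w)))"

definition omega_step :: "'a::linorder list \<times> 'a list \<Rightarrow> 'a list \<times> 'a list \<Rightarrow> bool" where
  "omega_step S1 S2 \<longleftrightarrow> (case S1 of (O1, E1) \<Rightarrow> case S2 of (O2, E2) \<Rightarrow>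
     E1 \<noteq> [] \<and>
     (let ofs = LF O1; efs = LF E1; e1 = hd efs; oh = last_factor O1 in
       (ext_lt_w oh e1 \<and> O2 = O1 @ e1 \<and> E2 = concat (tl efs)) \<or>
       (\<not> ext_lt_w oh e1 \<and> (\<exists>r ts. is_ISF oh e1 r ts \<and>
          ((ext_le_w oh (hd ts) \<and> O2 = concat (butlast ofs) @ r @ hd ts @ the oh \<and>
              E2 = concat (tl ts) @ concat (tl efs)) \<or>
           (w_lt_ext (hd ts) oh \<and> O2 = O1 @ hd ts @ r \<and>
              E2 = concat (tl ts) @ concat (tl efs)))))))"

definition omega_init :: "'a::linorder list \<Rightarrow> 'a list \<times> 'a list" where
  "omega_init w = (if odd (length w)
     then (concat (filter (\<lambda>f. length f = 1) (LF w)), concat (filter (\<lambda>f. length f \<noteq> 1) (LF w)))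
     else ([], w))"

inductive omega_reach :: "'a::linorder list \<Rightarrow> 'a list \<times> 'a list \<Rightarrow> bool" for w where
  init: "omega_reach w (omega_init w)"
| step: "omega_reach w S1 \<Longrightarrow> snd S1 \<noteq> [] \<Longrightarrow> omega_step S1 S2 \<Longrightarrow> omega_reach w S2"

definition splittable :: "'a::linorder list option \<Rightarrow> 'a list \<Rightarrow> bool" where
  "splittable prev om \<longleftrightarrow> 2 \<le> length om \<and> (\<exists>r s. std_fact om r s \<and> w_lt_ext s prev)"

definition psi_step :: "'a::linorder list \<times> 'a list \<Rightarrow> 'a list \<times> 'a list \<Rightarrow> bool" where
  "psi_step S1 S2 \<longleftrightarrow> (case S1 of (O1, E) \<Rightarrow> case S2 of (O2, E2) \<Rightarrow>
     2 \<le> length O1 \<and>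
     (let fs = LF O1; m = length fs; om = last fs;
          prev = (if m = 1 then None else Some (fs ! (m - 2))) in
       (splittable prev om \<and> (\<exists>r s. std_fact om r s \<and>
          ((odd (length r) \<and> O2 = concat (butlast fs) @ r \<and> E2 = s @ E) \<or>
           (even (length r) \<and> O2 = concat (butlast fs) @ s \<and> E2 = r @ E)))) \<or>
       (\<not> splittable prev om \<and> 2 \<le> m \<and>
          O2 = concat (take (m - 2) fs) \<and> E2 = om @ fs ! (m - 2) @ E)))"

end

theory Submission
  imports Defs "HOL-Library.List_Lexorder" "HOL-Library.Sublist"
begin

(* Along the computation of Omega the pair (O, E) keeps the following shape (omega_inv): the
   Lyndon factors of O are odd and strictly decreasing, those of E are even, and every factor of E
   is smaller than the penultimate factor of O and at most the standard right factor of the last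
   factor o_h of O.  Under this invariant each move of (omega) is undone by the matching move of
   (psi).  After (S') the last factor o_h e_1 has standard factorization (o_h, e_1) with o_h odd;
   after (P') the last factor r_j s_j o_h has standard factorization (r_j s_j, o_h) with r_j s_j
   even; after (F') the last two factors are s_j > r_j, and r_j is not splittable because its
   standard right factor is at least s_j: standard right factors only grow along an iterated
   standard factorization. *)


lemma wlt_iff_less: "wlt u v \<longleftrightarrow> u < v"
  by (simp add: wlt_def list_less_def)

lemma wle_iff_less_eq: "wle u v \<longleftrightarrow> u \<le> v"
  by (simp add: wle_def wlt_iff_less list_le_def)

lemma append_less_append_iff [simp]: "w @ u < w @ v \<longleftrightarrow> u < (v::'a::linorder list)"
  by (induct w) auto

lemma append_le_append_iff [simp]: "w @ u \<le> w @ v \<longleftrightarrow> u \<le> (v::'a::linorder list)"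
  by (induct w) auto

lemma le_append: "(u::'a::linorder list) \<le> u @ v"
  by (induct u) auto

lemma less_append: "v \<noteq> [] \<Longrightarrow> (u::'a::linorder list) < u @ v"
  by (induct u) (auto simp: neq_Nil_conv)

lemma append_less_append_if_not_prefix:
  "(u::'a::linorder list) < v \<Longrightarrow> \<not> prefix u v \<Longrightarrow> u @ x < v @ y"
proof (induct u arbitrary: v)
  case (Cons a u)
  then show ?case by (cases v) auto
qed simp

lemma sorted_wrt_snoc:
  "transp P \<Longrightarrow> sorted_wrt P (xs @ [y]) \<longleftrightarrow> sorted_wrt P xs \<and> (xs \<noteq> [] \<longrightarrow> P (last xs) y)"
  by (induct xs) (auto dest: transpD)

lemma sorted_wrt_ge_last_le: "sorted_wrt (\<ge>) xs \<Longrightarrow> x \<in> set xs \<Longrightarrow> last xs \<le> (x::'a::order)"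
  by (induct xs) (auto intro: order_trans)

lemma even_length_concat: "\<forall>t\<in>set ts. even (length t) \<Longrightarrow> even (length (concat ts))"
  by (induct ts) auto

lemma even_length_concat_iff:
  "even (length (concat fs)) \<longleftrightarrow> even (length (filter (\<lambda>f. odd (length f)) fs))"
  by (induct fs) auto


section \<open>Lyndon words\<close>

lemma lyndon_iff:
  "lyndon (w::'a::linorder list) \<longleftrightarrow> w \<noteq> [] \<and> (\<forall>x y. w = x @ y \<longrightarrow> x \<noteq> [] \<longrightarrow> y \<noteq> [] \<longrightarrow> w < y)"
proof
  assume L: "lyndon w"
  show "w \<noteq> [] \<and> (\<forall>x y. w = x @ y \<longrightarrow> x \<noteq> [] \<longrightarrow> y \<noteq> [] \<longrightarrow> w < y)"
  proof (intro conjI allI impI)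
    show "w \<noteq> []" using L by (simp add: lyndon_def)
    fix x y assume xy: "w = x @ y" "x \<noteq> []" "y \<noteq> []"
    then have "w < drop (length x) w" using L by (auto simp: lyndon_def wlt_iff_less)
    then show "w < y" using xy by simp
  qed
next
  assume H: "w \<noteq> [] \<and> (\<forall>x y. w = x @ y \<longrightarrow> x \<noteq> [] \<longrightarrow> y \<noteq> [] \<longrightarrow> w < y)"
  show "lyndon w" unfolding lyndon_def wlt_iff_less
  proof (intro conjI allI impI)
    show "w \<noteq> []" using H by simp
    fix k assume "0 < k \<and> k < length w"
    then have "take k w \<noteq> []" "drop k w \<noteq> []" by auto
    then show "w < drop k w" using H append_take_drop_id by metis
  qed
qed

lemma lyndon_less_suffix: "lyndon (x @ y) \<Longrightarrow> x \<noteq> [] \<Longrightarrow> y \<noteq> [] \<Longrightarrow> x @ y < (y::'a::linorder list)"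
  by (simp add: lyndon_iff)

lemma lyndon_not_Nil: "lyndon w \<Longrightarrow> w \<noteq> []"
  by (simp add: lyndon_def)

lemma lyndon_singleton [simp]: "lyndon [a::'a::linorder]"
  by (auto simp: lyndon_iff Cons_eq_append_conv)

lemma append_less_lyndon:
  fixes p u e :: "'a::linorder list"
  assumes p: "lyndon p" and "u \<noteq> []" "u < p" "e \<le> p"
  shows "u @ e < p"
proof (cases "prefix u p")
  case True
  then obtain z where z: "p = u @ z" by (auto elim: prefixE)
  then have "z \<noteq> []" using assms by auto
  then have "p < z" using p z assms lyndon_less_suffix by blast
  then show ?thesis using z assms by simp
next
  case False
  then show ?thesis using append_less_append_if_not_prefix[OF \<open>u < p\<close>, of e "[]"] by simp
qed

lemma lyndon_append:
  fixes u v :: "'a::linorder list"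
  assumes u: "lyndon u" and v: "lyndon v" and uv: "u < v"
  shows "lyndon (u @ v)"
proof -
  have u_ne: "u \<noteq> []" using u lyndon_not_Nil by auto
  have uv_less_v: "u @ v < v" using append_less_lyndon[OF v u_ne uv] by simp
  show ?thesis unfolding lyndon_iff
  proof (intro conjI allI impI)
    show "u @ v \<noteq> []" using u_ne by simp
    fix x y assume xy: "u @ v = x @ y" "x \<noteq> []" "y \<noteq> []"
    then obtain m where "(u = x @ m \<and> m @ v = y) \<or> (x = u @ m \<and> v = m @ y)"
      by (auto simp: append_eq_append_conv2)
    then show "u @ v < y"
    proof
      assume split: "u = x @ m \<and> m @ v = y"
      show ?thesis
      proof (cases "m = []")
        case False
        then have "u < m" using split u xy(2) lyndon_less_suffix by blast
        moreover have "\<not> prefix u m" using split xy(2) prefix_length_le by fastforce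
        ultimately show ?thesis using append_less_append_if_not_prefix split by blast
      qed (use split uv_less_v in simp)
    next
      assume split: "x = u @ m \<and> v = m @ y"
      show ?thesis
      proof (cases "m = []")
        case False
        then show ?thesis using split v xy(3) lyndon_less_suffix uv_less_v by fastforce
      qed (use split uv_less_v in simp)
    qed
  qed
qed


lemma lyndon_factorization_iff:
  "lyndon_factorization w fs \<longleftrightarrow> concat fs = w \<and> (\<forall>f\<in>set fs. lyndon f) \<and> sorted_wrt (\<ge>) fs"
  by (simp add: lyndon_factorization_def wle_iff_less_eq)

lemma prefix_of_concat_ends_in_factor:
  "q \<noteq> [] \<Longrightarrow> concat gs = q @ t \<Longrightarrow> \<exists>g\<in>set gs. \<exists>x y p. x \<noteq> [] \<and> g = x @ y \<and> q = p @ x"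
proof (induct gs arbitrary: q t)
  case (Cons g gs)
  then obtain m where "(g = q @ m \<and> m @ concat gs = t) \<or> (q = g @ m \<and> concat gs = m @ t)"
    by (auto simp: append_eq_append_conv2)
  then show ?case
  proof
    assume "g = q @ m \<and> m @ concat gs = t"
    then show ?thesis using Cons.prems by auto
  next
    assume split: "q = g @ m \<and> concat gs = m @ t"
    show ?thesis
    proof (cases "m = []")
      case True
      then show ?thesis using split Cons.prems by auto
    next
      case False
      then obtain h x y p where "h \<in> set gs" "x \<noteq> []" "h = x @ y" "m = p @ x"
        using Cons.hyps split by blast
      then show ?thesis using split by (metis append.assoc list.set_intros(2))
    qed
  qed
qed simp

lemma length_lyndon_prefix_le_first_factor:
  fixes w :: "'a::linorder list"
  assumes F: "lyndon_factorization w (f # fs)" and p: "lyndon p" and wp: "w = p @ t"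
  shows "length p \<le> length f"
proof (rule ccontr)
  assume longer: "\<not> length p \<le> length f"
  from F have w: "w = f @ concat fs" and f: "lyndon f" and sorted: "\<forall>g\<in>set fs. g \<le> f"
    by (auto simp: lyndon_factorization_iff)
  have "f @ concat fs = p @ t" using w wp by simp
  then obtain m where "(f = p @ m \<and> m @ concat fs = t) \<or> (p = f @ m \<and> concat fs = m @ t)"
    by (auto simp: append_eq_append_conv2)
  then have m: "p = f @ m" "concat fs = m @ t" "m \<noteq> []" using longer by auto
  obtain g x y q where g: "g \<in> set fs" "x \<noteq> []" "g = x @ y" "m = q @ x"
    using prefix_of_concat_ends_in_factor[OF m(3) m(2)] by blast
  have "p = (f @ q) @ x" "f @ q \<noteq> []" using m g f lyndon_not_Nil by auto
  then have "p < x" using p g(2) lyndon_less_suffix by metis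
  also have "x \<le> g" using g(3) le_append by simp
  also have "g \<le> f" using sorted g(1) by simp
  also have "f \<le> p" using m le_append by simp
  finally show False by simp
qed

lemma lyndon_factorization_unique:
  "lyndon_factorization (w::'a::linorder list) fs \<Longrightarrow> lyndon_factorization w gs \<Longrightarrow> fs = gs"
proof (induct fs arbitrary: w gs)
  case Nil
  then show ?case by (cases gs) (auto simp: lyndon_factorization_iff dest: lyndon_not_Nil)
next
  case (Cons f fs)
  then have w: "w = f @ concat fs" by (simp add: lyndon_factorization_iff)
  obtain g gs' where gs: "gs = g # gs'"
    using Cons.prems w by (cases gs) (auto simp: lyndon_factorization_iff dest: lyndon_not_Nil)
  then have w': "w = g @ concat gs'" using Cons.prems(2) by (simp add: lyndon_factorization_iff)
  have "length g \<le> length f"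
    using length_lyndon_prefix_le_first_factor[OF Cons.prems(1)] Cons.prems(2) gs w'
    by (auto simp: lyndon_factorization_iff)
  moreover have "length f \<le> length g"
    using length_lyndon_prefix_le_first_factor[of w g gs' f] Cons.prems gs w
    by (auto simp: lyndon_factorization_iff)
  ultimately have "f = g" using w w' by (metis append_eq_append_conv le_antisym)
  then show ?case
    using Cons gs w w' by (auto simp: lyndon_factorization_iff)
qed

fun lyndon_push :: "'a::linorder list \<Rightarrow> 'a list list \<Rightarrow> 'a list list" where
  "lyndon_push x [] = [x]"
| "lyndon_push x (f # fs) = (if x < f then lyndon_push (x @ f) fs else x # f # fs)"

lemma lyndon_factorization_push:
  "lyndon x \<Longrightarrow> lyndon_factorization w fs \<Longrightarrow> lyndon_factorization (x @ w) (lyndon_push x fs)"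
proof (induct x fs arbitrary: w rule: lyndon_push.induct)
  case (1 x)
  then show ?case by (simp add: lyndon_factorization_iff)
next
  case (2 x f fs)
  show ?case
  proof (cases "x < f")
    case True
    then have "lyndon (x @ f)" using 2 lyndon_append by (auto simp: lyndon_factorization_iff)
    then show ?thesis using 2 True by (auto simp: lyndon_factorization_iff)
  next
    case False
    then show ?thesis using "2.prems" by (auto simp: lyndon_factorization_iff intro: order_trans)
  qed
qed

lemma LF_eqI: "lyndon_factorization (w::'a::linorder list) fs \<Longrightarrow> LF w = fs"
  unfolding LF_def using lyndon_factorization_unique by blast

lemma lyndon_factorization_LF: "lyndon_factorization (w::'a::linorder list) (LF w)"
proof -
  have "\<exists>fs. lyndon_factorization w fs"
  proof (induct w)
    case Nil
    have "lyndon_factorization [] ([] :: 'a list list)" by (simp add: lyndon_factorization_iff)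
    then show ?case ..
  next
    case (Cons a w)
    then show ?case using lyndon_factorization_push[of "[a]"] by fastforce
  qed
  then show ?thesis using LF_eqI by metis
qed

lemma LF_eqI_strict:
  assumes "concat fs = w" "\<forall>f\<in>set fs. lyndon f" "sorted_wrt (>) fs"
  shows "LF w = (fs::'a::linorder list list)"
proof (rule LF_eqI)
  have "sorted_wrt (\<ge>) fs" by (rule sorted_wrt_mono_rel[OF _ assms(3)]) simp
  then show "lyndon_factorization w fs" using assms by (simp add: lyndon_factorization_iff)
qed

lemma concat_LF [simp]: "concat (LF w) = (w::'a::linorder list)"
  and lyndon_LF: "f \<in> set (LF w) \<Longrightarrow> lyndon f"
  and sorted_LF: "sorted_wrt (\<ge>) (LF w)"
  using lyndon_factorization_LF[of w] by (auto simp: lyndon_factorization_iff)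

lemma LF_Cons_tl: "LF w = e # es \<Longrightarrow> LF (concat es) = es"
  using lyndon_LF[of _ w] sorted_LF[of w] by (intro LF_eqI) (simp add: lyndon_factorization_iff)

lemma LF_Cons_le_hd: "LF w = e # es \<Longrightarrow> f \<in> set es \<Longrightarrow> f \<le> e"
  using sorted_LF[of w] by auto

lemma LF_Cons_less: "LF w = e # es \<Longrightarrow> e < b \<Longrightarrow> f \<in> set es \<Longrightarrow> f < b"
  using LF_Cons_le_hd by (blast intro: le_less_trans)

lemma LF_snoc_append:
  fixes u v :: "'a::linorder list"
  assumes sorted: "sorted_wrt (>) os" and lyn: "\<forall>f\<in>set os. lyndon f" "lyndon (u @ v)"
    and "u \<noteq> []" and below: "os \<noteq> [] \<longrightarrow> u < last os \<and> v < last os"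
  shows "sorted_wrt (>) (os @ [u @ v])" and "LF (concat os @ u @ v) = os @ [u @ v]"
proof -
  have "u @ v < last os" if "os \<noteq> []"
    using append_less_lyndon[of "last os" u v] lyn below that \<open>u \<noteq> []\<close> by (auto simp: less_imp_le)
  then show sorted': "sorted_wrt (>) (os @ [u @ v])" using sorted by (simp add: sorted_wrt_snoc)
  then show "LF (concat os @ u @ v) = os @ [u @ v]" using lyn by (intro LF_eqI_strict) auto
qed


section \<open>Standard factorization\<close>

lemma min_proper_suffix_iff:
  "min_proper_suffix l s \<longleftrightarrow> (\<exists>k. 0 < k \<and> k < length l \<and> s = drop k l) \<and>
     (\<forall>k. 0 < k \<and> k < length l \<longrightarrow> s \<le> drop k (l::'a::linorder list))"
  by (simp add: min_proper_suffix_def wle_iff_less_eq)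

lemma min_proper_suffixI:
  fixes l r s :: "'a::linorder list"
  assumes "l = r @ s" "r \<noteq> []" "s \<noteq> []"
    and "\<And>x y. l = x @ y \<Longrightarrow> x \<noteq> [] \<Longrightarrow> y \<noteq> [] \<Longrightarrow> s \<le> y"
  shows "min_proper_suffix l s"
  unfolding min_proper_suffix_iff
proof (intro conjI allI impI)
  show "\<exists>k>0. k < length l \<and> s = drop k l" using assms by (intro exI[of _ "length r"]) auto
  fix k assume "0 < k \<and> k < length l"
  then have "take k l \<noteq> []" "drop k l \<noteq> []" by auto
  then show "s \<le> drop k l" using assms(4) append_take_drop_id by metis
qed

lemma min_proper_suffix_split:
  assumes "min_proper_suffix l s"
  obtains r where "l = r @ s" "r \<noteq> []" "s \<noteq> []"
proof -
  obtain k where "0 < k" "k < length l" "s = drop k l"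
    using assms by (auto simp: min_proper_suffix_def)
  then show ?thesis by (intro that[of "take k l"]) auto
qed

lemma min_proper_suffix_le:
  "min_proper_suffix (l::'a::linorder list) s \<Longrightarrow> l = x @ y \<Longrightarrow> x \<noteq> [] \<Longrightarrow> y \<noteq> [] \<Longrightarrow> s \<le> y"
  unfolding min_proper_suffix_iff by (metis append_eq_conv_conj length_greater_0_conv length_append
      less_add_same_cancel1)

lemma min_proper_suffix_unique:
  "min_proper_suffix (l::'a::linorder list) s \<Longrightarrow> min_proper_suffix l s' \<Longrightarrow> s = s'"
  unfolding min_proper_suffix_iff by (metis order_antisym)

lemma min_proper_suffix_exists: "2 \<le> length (l::'a::linorder list) \<Longrightarrow> \<exists>s. min_proper_suffix l s"
proof -
  assume "2 \<le> length l"
  let ?S = "(\<lambda>k. drop k l) ` {1..<length l}"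
  have fin: "finite ?S" and ne: "?S \<noteq> {}" using \<open>2 \<le> length l\<close> by auto
  obtain k0 where "k0 \<in> {1..<length l}" "Min ?S = drop k0 l" using Min_in[OF fin ne] by blast
  moreover have "\<forall>k. 0 < k \<and> k < length l \<longrightarrow> Min ?S \<le> drop k l"
    using fin by (auto intro: Min_le)
  ultimately have "min_proper_suffix l (Min ?S)"
    unfolding min_proper_suffix_iff by (auto intro!: exI[of _ k0])
  then show ?thesis ..
qed

lemma min_proper_suffix_lyndon: "min_proper_suffix (l::'a::linorder list) s \<Longrightarrow> lyndon s"
proof -
  assume m: "min_proper_suffix l s"
  then obtain r where r: "l = r @ s" "r \<noteq> []" "s \<noteq> []" by (rule min_proper_suffix_split)
  show "lyndon s" unfolding lyndon_iff
  proof (intro conjI allI impI)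
    show "s \<noteq> []" by fact
    fix x y assume xy: "s = x @ y" "x \<noteq> []" "y \<noteq> []"
    have "s \<le> y" using min_proper_suffix_le[OF m, of "r @ x" y] r xy by simp
    moreover have "s \<noteq> y" using xy by auto
    ultimately show "s < y" by simp
  qed
qed

lemma std_fact_if_min_proper_suffix:
  fixes l r s :: "'a::linorder list"
  assumes m: "min_proper_suffix l s" and l: "l = r @ s"
  shows "std_fact l r s"
  unfolding std_fact_def
proof (intro conjI allI impI)
  show "l = r @ s" by fact
  show "r \<noteq> []" using m l by (auto elim: min_proper_suffix_split)
  show "lyndon s" using m by (rule min_proper_suffix_lyndon)
  fix k assume k: "0 < k \<and> k < length l \<and> lyndon (drop k l)"
  show "length (drop k l) \<le> length s"
  proof (rule ccontr)
    assume longer: "\<not> length (drop k l) \<le> length s"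
    define q where "q = take (length (drop k l) - length s) (drop k l)"
    have "drop (length (drop k l) - length s) (drop k l) = s"
      using l longer by (simp add: add.commute)
    then have "drop k l = q @ s" unfolding q_def by (metis append_take_drop_id)
    moreover have "q \<noteq> []" using longer by (simp add: q_def) arith
    moreover have "s \<noteq> []" using m by (auto elim: min_proper_suffix_split)
    ultimately have "drop k l < s" using k lyndon_less_suffix by metis
    moreover have "s \<le> drop k l" using m k by (simp add: min_proper_suffix_iff)
    ultimately show False by simp
  qed
qed

lemma std_fact_longest:
  "std_fact l r s \<Longrightarrow> l = q @ t \<Longrightarrow> q \<noteq> [] \<Longrightarrow> t \<noteq> [] \<Longrightarrow> lyndon t \<Longrightarrow> length t \<le> length s"
  unfolding std_fact_def by (metis append_eq_conv_conj length_append length_greater_0_conv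
      less_add_same_cancel1)

lemma min_proper_suffix_if_std_fact:
  fixes l r s :: "'a::linorder list"
  assumes st: "std_fact l r s"
  shows "min_proper_suffix l s"
proof -
  have l: "l = r @ s" "r \<noteq> []" "lyndon s" using st by (auto simp: std_fact_def)
  then have "s \<noteq> []" using lyndon_not_Nil by blast
  then have "2 \<le> length l" using l by (cases r; cases s) auto
  then obtain m where m: "min_proper_suffix l m" using min_proper_suffix_exists by blast
  then obtain r' where r': "l = r' @ m" "r' \<noteq> []" "m \<noteq> []" by (rule min_proper_suffix_split)
  have "length m \<le> length s"
    using std_fact_longest[OF st r'] min_proper_suffix_lyndon[OF m] .
  moreover have "length s \<le> length m"
    using std_fact_longest[OF std_fact_if_min_proper_suffix[OF m r'(1)] l(1,2) \<open>s \<noteq> []\<close> l(3)] .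
  ultimately have "s = m" using l r' by (metis append_eq_append_conv le_antisym)
  then show ?thesis using m by simp
qed

lemma lyndon_left_factor:
  fixes l r s :: "'a::linorder list"
  assumes L: "lyndon l" and m: "min_proper_suffix l s" and l: "l = r @ s"
  shows "lyndon r"
  unfolding lyndon_iff
proof (intro conjI allI impI)
  show "r \<noteq> []" using m l by (auto elim: min_proper_suffix_split)
  fix x y assume xy: "r = x @ y" "x \<noteq> []" "y \<noteq> []"
  show "r < y"
  proof (rule ccontr)
    assume "\<not> r < y"
    have ly: "l < y @ s" using lyndon_less_suffix[of x "y @ s"] L l xy by simp
    show False
    proof (cases "prefix y r")
      case True
      then obtain t where t: "r = y @ t" by (auto elim: prefixE)
      then have "t \<noteq> []" using xy by auto
      have "t @ s < s" using ly l t by simp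
      moreover have "s \<le> t @ s" using min_proper_suffix_le[OF m, of y "t @ s"] l xy t \<open>t \<noteq> []\<close>
        by simp
      ultimately show False by simp
    next
      case False
      then have "y \<noteq> r" by auto
      then have "y < r" using \<open>\<not> r < y\<close> by simp
      then have "y @ s < r @ s" using append_less_append_if_not_prefix False by blast
      then show False using ly l by simp
    qed
  qed
qed

lemma min_proper_suffix_le_of_left_factor:
  fixes l r s s' :: "'a::linorder list"
  assumes m: "min_proper_suffix l s" and l: "l = r @ s" and m': "min_proper_suffix r s'"
  shows "s \<le> s'"
proof (rule ccontr)
  assume "\<not> s \<le> s'"
  then have "lyndon (s' @ s)"
    using lyndon_append min_proper_suffix_lyndon m m' by (metis linorder_not_le)
  moreover obtain q where q: "r = q @ s'" "q \<noteq> []" "s' \<noteq> []"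
    using m' by (rule min_proper_suffix_split)
  moreover have "l = q @ s' @ s" using q l by simp
  ultimately have "length (s' @ s) \<le> length s"
    using std_fact_longest[OF std_fact_if_min_proper_suffix[OF m l]] by blast
  then show False using q by simp
qed

lemma min_proper_suffix_append:
  fixes u v :: "'a::linorder list"
  assumes u: "lyndon u" and v: "lyndon v" and uv: "u < v"
    and right: "\<And>s. min_proper_suffix u s \<Longrightarrow> v \<le> s"
  shows "min_proper_suffix (u @ v) v"
proof (rule min_proper_suffixI[of _ u v])
  show "u \<noteq> []" "v \<noteq> []" using u v lyndon_not_Nil by auto
  fix x y assume xy: "u @ v = x @ y" "x \<noteq> []" "y \<noteq> []"
  then obtain m where "(u = x @ m \<and> m @ v = y) \<or> (x = u @ m \<and> v = m @ y)"
    by (auto simp: append_eq_append_conv2)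
  then show "v \<le> y"
  proof
    assume split: "u = x @ m \<and> m @ v = y"
    show ?thesis
    proof (cases "m = []")
      case False
      then have "2 \<le> length u" using split xy(2) by (cases x; cases m) auto
      then obtain s where s: "min_proper_suffix u s" using min_proper_suffix_exists by blast
      then have "v \<le> s" by (rule right)
      also have "s \<le> m" using min_proper_suffix_le[OF s] split xy(2) False by blast
      also have "m \<le> m @ v" by (rule le_append)
      finally show ?thesis using split by simp
    qed (use split in simp)
  next
    assume split: "x = u @ m \<and> v = m @ y"
    show ?thesis
    proof (cases "m = []")
      case False
      then show ?thesis using split v xy(3) lyndon_less_suffix by fastforce
    qed (use split in simp)
  qed
qed simp


section \<open>Iterated standard factorization\<close>

definition iterated_std_fact :: "'a::linorder list \<Rightarrow> 'a list list \<Rightarrow> 'a list \<Rightarrow> bool" where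
  "iterated_std_fact r ts l \<longleftrightarrow> ts \<noteq> [] \<and> l = r @ concat ts \<and>
     (\<forall>i<length ts. min_proper_suffix (r @ concat (take (Suc i) ts)) (ts ! i))"

lemma iterated_std_fact_snoc:
  assumes chain: "iterated_std_fact r (ts @ [s]) l" and "ts \<noteq> []"
  shows "iterated_std_fact r ts (r @ concat ts)" "min_proper_suffix (r @ concat ts) (last ts)"
proof -
  have step: "min_proper_suffix (r @ concat (take (Suc i) ts)) (ts ! i)" if "i < length ts" for i
    using chain that unfolding iterated_std_fact_def by (auto dest!: spec[of _ i] simp: nth_append)
  then show "iterated_std_fact r ts (r @ concat ts)"
    using \<open>ts \<noteq> []\<close> by (simp add: iterated_std_fact_def)
  show "min_proper_suffix (r @ concat ts) (last ts)"
    using step[of "length ts - 1"] \<open>ts \<noteq> []\<close> by (simp add: last_conv_nth)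
qed

lemma iterated_std_fact_lyndon:
  assumes "iterated_std_fact r ts l" "lyndon l"
  shows "lyndon (r @ hd ts) \<and> sorted_wrt (\<ge>) ts \<and> (\<forall>t\<in>set ts. lyndon t \<and> l < t)"
  using assms
proof (induct ts arbitrary: l rule: rev_induct)
  case Nil
  then show ?case by (simp add: iterated_std_fact_def)
next
  case (snoc s ts)
  let ?l' = "r @ concat ts"
  have l: "l = ?l' @ s" using snoc.prems by (simp add: iterated_std_fact_def)
  have m: "min_proper_suffix l s"
    using snoc.prems(1) unfolding iterated_std_fact_def
    by (auto dest!: spec[of _ "length ts"] simp: l)
  then obtain q where "l = q @ s" "q \<noteq> []" "s \<noteq> []" by (rule min_proper_suffix_split)
  then have "l < s" using lyndon_less_suffix snoc.prems(2) by blast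
  show ?case
  proof (cases "ts = []")
    case True
    then show ?thesis using l m \<open>l < s\<close> snoc.prems(2) min_proper_suffix_lyndon[OF m] by auto
  next
    case False
    note prefix_chain = iterated_std_fact_snoc[OF snoc.prems(1) False]
    have "lyndon ?l'" using lyndon_left_factor[OF snoc.prems(2) m l] .
    note IH = snoc.hyps[OF prefix_chain(1) this]
    have "s \<le> last ts" using min_proper_suffix_le_of_left_factor[OF m l prefix_chain(2)] .
    then have "\<forall>t\<in>set ts. s \<le> t"
      using IH sorted_wrt_ge_last_le order.trans by blast
    then show ?thesis
      using IH False \<open>l < s\<close> min_proper_suffix_lyndon[OF m] by (auto simp: sorted_wrt_append)
  qed
qed

lemma is_ISF_ConsD:
  assumes isf: "is_ISF u l r (s # ts)"
  shows "l = (r @ s) @ concat ts" and "iterated_std_fact r (s # ts) l"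
    and "min_proper_suffix (r @ s) s" and "\<forall>t\<in>set ts. even (length t) \<and> w_lt_ext t u"
    and "odd (length s) \<or> ext_le_w u s"
proof -
  show "l = (r @ s) @ concat ts" "iterated_std_fact r (s # ts) l" "odd (length s) \<or> ext_le_w u s"
    using isf by (auto simp: is_ISF_def iterated_std_fact_def)
  show "min_proper_suffix (r @ s) s"
    using isf unfolding is_ISF_def by (auto dest!: spec[of _ 0])
  show "\<forall>t\<in>set ts. even (length t) \<and> w_lt_ext t u"
  proof
    fix t assume "t \<in> set ts"
    then obtain j where "j < length ts" "t = ts ! j" by (auto simp: in_set_conv_nth)
    then show "even (length t) \<and> w_lt_ext t u"
      using isf unfolding is_ISF_def by (auto dest!: spec[of _ "Suc j"])
  qed
qed

lemma is_ISF_lyndon: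
  assumes isf: "is_ISF u l r (s # ts)" and "lyndon l"
  shows "lyndon (r @ s)" and "lyndon r" and "r < s" and "sorted_wrt (\<ge>) (s # ts)"
    and "\<forall>t\<in>set (s # ts). lyndon t \<and> l < t"
proof -
  note chain = iterated_std_fact_lyndon[OF is_ISF_ConsD(2)[OF isf] \<open>lyndon l\<close>]
  show "lyndon (r @ s)" "sorted_wrt (\<ge>) (s # ts)" "\<forall>t\<in>set (s # ts). lyndon t \<and> l < t"
    using chain by simp_all
  have m: "min_proper_suffix (r @ s) s" by (rule is_ISF_ConsD(3)[OF isf])
  show "lyndon r" using lyndon_left_factor[OF \<open>lyndon (r @ s)\<close> m] by simp
  obtain q where "r @ s = q @ s" "q \<noteq> []" "s \<noteq> []" using m by (rule min_proper_suffix_split)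
  then have "r < r @ s" "r @ s < s"
    using less_append lyndon_less_suffix[OF \<open>lyndon (r @ s)\<close>] by auto
  then show "r < s" by simp
qed

lemma is_ISF_even_left:
  assumes isf: "is_ISF u l r (s # ts)" and "even (length l)"
  shows "even (length (r @ s))"
proof -
  have "even (length (concat ts))" using is_ISF_ConsD(4)[OF isf] even_length_concat by blast
  then show ?thesis using is_ISF_ConsD(1)[OF isf] \<open>even (length l)\<close> by simp
qed

lemma LF_after_ISF:
  assumes E: "LF w = l # es" and isf: "is_ISF u l r (s # ts)"
  shows "LF (concat ts @ concat es) = ts @ es"
proof (rule LF_eqI)
  have "lyndon l" using E lyndon_LF[of l w] by simp
  note ts = is_ISF_lyndon(4,5)[OF isf this]
  have cross: "e \<le> t" if "t \<in> set ts" "e \<in> set es" for t e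
  proof -
    have "e \<le> l" using LF_Cons_le_hd[OF E that(2)] .
    also have "l < t" using ts(2) that(1) by simp
    finally show ?thesis by simp
  qed
  have "\<forall>e\<in>set es. lyndon e" "sorted_wrt (\<ge>) es" using lyndon_LF[of _ w] sorted_LF[of w] E by auto
  then show "lyndon_factorization (concat ts @ concat es) (ts @ es)"
    using ts cross by (auto simp: lyndon_factorization_iff sorted_wrt_append)
qed

lemma is_ISF_left_suffixes:
  "is_ISF u l r (s # ts) \<Longrightarrow> min_proper_suffix r s' \<Longrightarrow> s \<le> s'"
  using min_proper_suffix_le_of_left_factor is_ISF_ConsD(3) by blast

lemma is_ISF_left_not_splittable:
  assumes isf: "is_ISF u l r (s # ts)"
  shows "\<not> splittable (Some s) r"
proof
  assume "splittable (Some s) r"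
  then obtain r' s' where st: "std_fact r r' s'" and "s' < s"
    by (auto simp: splittable_def wlt_iff_less)
  moreover have "s \<le> s'" using is_ISF_left_suffixes[OF isf min_proper_suffix_if_std_fact[OF st]] .
  ultimately show False by simp
qed

lemma is_ISF_odd_if_less:
  assumes isf: "is_ISF u l r (s # ts)" and less: "w_lt_ext s u"
  shows "odd (length s)"
proof -
  have "\<not> ext_le_w u s" using less by (cases u) (auto simp: wlt_iff_less wle_iff_less_eq)
  then show ?thesis using is_ISF_ConsD(5)[OF isf] by simp
qed

lemma is_ISF_remainder_less:
  assumes isf: "is_ISF u l r (s # ts)" and "lyndon l" and "odd (length s)" and t: "t \<in> set ts"
  shows "t < s"
proof -
  have "t \<le> s" "even (length t)"
    using t is_ISF_lyndon(4)[OF isf \<open>lyndon l\<close>] is_ISF_ConsD(4)[OF isf] by auto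
  moreover have "t \<noteq> s" using calculation(2) \<open>odd (length s)\<close> by auto
  ultimately show ?thesis by simp
qed


lemma psi_step_splittable:
  fixes om r s :: "'a::linorder list"
  assumes O2: "LF O2 = fs @ [om]" and st: "std_fact om r s" and prev: "fs \<noteq> [] \<longrightarrow> s < last fs"
  shows "odd (length r) \<Longrightarrow> psi_step (O2, E2) (concat fs @ r, s @ E2)"
    and "even (length r) \<Longrightarrow> psi_step (O2, E2) (concat fs @ s, r @ E2)"
proof -
  have "r \<noteq> []" "s \<noteq> []" using st lyndon_not_Nil by (auto simp: std_fact_def)
  then have len: "2 \<le> length om" using st by (cases r; cases s) (auto simp: std_fact_def)
  moreover have "2 \<le> length O2" using len arg_cong[OF O2, of concat] by simp
  moreover have "splittable (if fs = [] then None else Some (last fs)) om"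
    using st prev len unfolding splittable_def by (auto simp: wlt_iff_less)
  ultimately have psi_iff: "psi_step (O2, E2) (O1, E1) \<longleftrightarrow>
    (\<exists>r s. std_fact om r s \<and> (odd (length r) \<and> O1 = concat fs @ r \<and> E1 = s @ E2 \<or>
                             even (length r) \<and> O1 = concat fs @ s \<and> E1 = r @ E2))" for O1 E1
    by (cases "fs = []") (simp_all add: psi_step_def Let_def O2 nth_append last_conv_nth)
  show "odd (length r) \<Longrightarrow> psi_step (O2, E2) (concat fs @ r, s @ E2)"
    and "even (length r) \<Longrightarrow> psi_step (O2, E2) (concat fs @ s, r @ E2)"
    using st by (auto simp: psi_iff)
qed

lemma psi_step_not_splittable:
  assumes O2: "LF O2 = fs @ [p, om]" and "\<not> splittable (Some p) om"
  shows "psi_step (O2, E2) (concat fs, om @ p @ E2)"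
proof -
  have "p \<in> set (LF O2)" "om \<in> set (LF O2)" using O2 by auto
  then have "p \<noteq> []" "om \<noteq> []" using lyndon_LF lyndon_not_Nil by blast+
  moreover have "O2 = concat fs @ p @ om" using arg_cong[OF O2, of concat] by simp
  ultimately have "2 \<le> length O2" by (cases p; cases om) auto
  then show ?thesis using assms by (simp add: psi_step_def Let_def O2 nth_append)
qed


section \<open>The invariant of the computation of Omega\<close>

definition omega_inv :: "'a::linorder list \<Rightarrow> 'a list \<Rightarrow> bool" where
  "omega_inv Ow Ew \<longleftrightarrow>
     (\<forall>f\<in>set (LF Ow). odd (length f)) \<and> sorted_wrt (>) (LF Ow) \<and>
     (\<forall>e\<in>set (LF Ew). even (length e)) \<and>
     (\<forall>os oh. LF Ow = os @ [oh] \<longrightarrow> (\<forall>e\<in>set (LF Ew).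
        (os \<noteq> [] \<longrightarrow> e < last os) \<and> (\<forall>s. min_proper_suffix oh s \<longrightarrow> e \<le> s)))"

lemma omega_invI:
  assumes "LF Ow = os @ [oh]" and "\<forall>f\<in>set (os @ [oh]). odd (length f)"
    and "sorted_wrt (>) (os @ [oh])"
    and "\<forall>e\<in>set (LF Ew). even (length e) \<and> (os \<noteq> [] \<longrightarrow> e < last os) \<and>
           (\<forall>s. min_proper_suffix oh s \<longrightarrow> e \<le> s)"
  shows "omega_inv Ow Ew"
  using assms by (auto simp: omega_inv_def)

lemma omega_invI_below:
  assumes "LF Ow = os @ [oh]" and "\<forall>f\<in>set (os @ [oh]). odd (length f)"
    and "sorted_wrt (>) (os @ [oh])" and below: "\<forall>e\<in>set (LF Ew). even (length e) \<and> e < b"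
    and "os \<noteq> [] \<longrightarrow> b \<le> last os" and "\<And>s. min_proper_suffix oh s \<Longrightarrow> b \<le> s"
  shows "omega_inv Ow Ew"
proof (rule omega_invI[OF assms(1-3)])
  show "\<forall>e\<in>set (LF Ew). even (length e) \<and> (os \<noteq> [] \<longrightarrow> e < last os) \<and>
      (\<forall>s. min_proper_suffix oh s \<longrightarrow> e \<le> s)"
  proof (intro ballI conjI impI allI)
    fix e s assume e: "e \<in> set (LF Ew)"
    then show "even (length e)" using below by blast
    show "e < last os" if "os \<noteq> []" using e below assms(5) that less_le_trans by blast
    show "e \<le> s" if "min_proper_suffix oh s"
      using e below assms(6)[OF that] less_le_trans less_imp_le by blast
  qed
qed

lemma omega_invD:
  assumes "omega_inv Ow Ew" and "LF Ow = os @ [oh]"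
  shows "\<forall>f\<in>set (os @ [oh]). odd (length f)" and "sorted_wrt (>) (os @ [oh])"
    and "\<forall>e\<in>set (LF Ew). even (length e) \<and> (os \<noteq> [] \<longrightarrow> e < last os) \<and>
           (\<forall>s. min_proper_suffix oh s \<longrightarrow> e \<le> s)"
  using assms by (auto simp: omega_inv_def)

lemma omega_step_S_inverse:
  fixes Ow Ew :: "'a::linorder list"
  assumes inv: "omega_inv Ow Ew" and O: "LF Ow = os @ [oh]" and E: "LF Ew = e # es"
    and less: "oh < e"
  shows "psi_step (Ow @ e, concat es) (Ow, Ew) \<and> omega_inv (Ow @ e) (concat es)"
proof -
  note odd_O = omega_invD(1)[OF inv O]
  have sorted_O: "sorted_wrt (>) os" "os \<noteq> [] \<longrightarrow> oh < last os"
    using omega_invD(2)[OF inv O] by (simp_all add: sorted_wrt_snoc)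
  have bounds: "\<forall>e'\<in>set (e # es). even (length e') \<and> (os \<noteq> [] \<longrightarrow> e' < last os) \<and>
      (\<forall>s. min_proper_suffix oh s \<longrightarrow> e' \<le> s)"
    using omega_invD(3)[OF inv O] E by simp
  have lyn: "lyndon oh" "lyndon e" "\<forall>f\<in>set os. lyndon f"
    using lyndon_LF[of _ Ow] lyndon_LF[of _ Ew] O E by auto
  have std: "min_proper_suffix (oh @ e) e"
    using min_proper_suffix_append[OF lyn(1,2) less] bounds by auto
  have O2: "sorted_wrt (>) (os @ [oh @ e])" "LF (Ow @ e) = os @ [oh @ e]"
    using LF_snoc_append[OF sorted_O(1) lyn(3) lyndon_append[OF lyn(1,2) less]]
      lyndon_not_Nil[OF lyn(1)] sorted_O(2) bounds arg_cong[OF O, of concat] by auto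
  show ?thesis
  proof
    show "psi_step (Ow @ e, concat es) (Ow, Ew)"
      using psi_step_splittable(1)[OF O2(2) std_fact_if_min_proper_suffix[OF std refl]]
        bounds odd_O arg_cong[OF O, of concat] arg_cong[OF E, of concat] by simp
    show "omega_inv (Ow @ e) (concat es)"
      using odd_O O2(1) bounds min_proper_suffix_unique[OF std] LF_Cons_tl[OF E]
        LF_Cons_le_hd[OF E]
      by (intro omega_invI[OF O2(2)]) (auto intro: le_less_trans)
  qed
qed

lemma omega_step_P_inverse:
  fixes Ow Ew :: "'a::linorder list"
  assumes inv: "omega_inv Ow Ew" and O: "LF Ow = os @ [oh]" and E: "LF Ew = e # es"
    and not_less: "\<not> oh < e" and isf: "is_ISF (Some oh) e r (s # ts)" and le: "oh \<le> s"
  defines "O2 \<equiv> concat os @ r @ s @ oh" and "E2 \<equiv> concat ts @ concat es"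
  shows "psi_step (O2, E2) (Ow, Ew) \<and> omega_inv O2 E2"
proof -
  note odd_O = omega_invD(1)[OF inv O]
  have sorted_O: "sorted_wrt (>) os" "os \<noteq> [] \<longrightarrow> oh < last os"
    using omega_invD(2)[OF inv O] by (simp_all add: sorted_wrt_snoc)
  have bounds: "\<forall>e'\<in>set (e # es). even (length e') \<and> (os \<noteq> [] \<longrightarrow> e' < last os)"
    using omega_invD(3)[OF inv O] E by simp
  have lyn: "lyndon oh" "lyndon e" "\<forall>f\<in>set os. lyndon f"
    using lyndon_LF[of _ Ow] lyndon_LF[of _ Ew] O E by auto
  have L: "lyndon (r @ s)" "min_proper_suffix (r @ s) s" "even (length (r @ s))"
    "e = (r @ s) @ concat ts"
    using is_ISF_lyndon(1)[OF isf lyn(2)] is_ISF_ConsD(1,3)[OF isf]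
      is_ISF_even_left[OF isf] bounds by auto
  have "e \<noteq> oh" using bounds odd_O by auto
  then have "e < oh" using not_less by simp
  moreover have L_le: "r @ s \<le> e" using L(4) le_append by simp
  ultimately have L_less: "r @ s < oh" by simp
  have std: "min_proper_suffix ((r @ s) @ oh) oh"
    using min_proper_suffix_append[OF L(1) lyn(1) L_less] min_proper_suffix_unique[OF L(2)] le
    by blast
  have O2: "sorted_wrt (>) (os @ [(r @ s) @ oh])" "LF O2 = os @ [(r @ s) @ oh]"
    using LF_snoc_append[OF sorted_O(1) lyn(3) lyndon_append[OF L(1) lyn(1) L_less]]
      lyndon_not_Nil[OF L(1)] sorted_O(2) bounds L_le unfolding O2_def
    by (auto intro: le_less_trans)
  have below_oh: "\<forall>e'\<in>set (LF E2). e' < oh \<and> even (length e')"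
    using LF_Cons_less[OF E \<open>e < oh\<close>] is_ISF_ConsD(4)[OF isf] bounds
    unfolding E2_def LF_after_ISF[OF E isf] by (auto simp: wlt_iff_less)
  show ?thesis
  proof
    show "psi_step (O2, E2) (Ow, Ew)"
      using psi_step_splittable(2)[OF O2(2) std_fact_if_min_proper_suffix[OF std refl]]
        sorted_O(2) L(3,4) arg_cong[OF O, of concat] arg_cong[OF E, of concat]
      unfolding E2_def by simp
    show "omega_inv O2 E2"
      using odd_O O2(1) below_oh L(3) sorted_O(2) min_proper_suffix_unique[OF std]
      by (intro omega_invI_below[OF O2(2), where b = oh]) auto
  qed
qed

lemma omega_step_F_inverse:
  fixes Ow Ew :: "'a::linorder list"
  assumes inv: "omega_inv Ow Ew" and E: "LF Ew = e # es"
    and isf: "is_ISF (last_factor Ow) e r (s # ts)" and less: "w_lt_ext s (last_factor Ow)"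
  defines "O2 \<equiv> Ow @ s @ r" and "E2 \<equiv> concat ts @ concat es"
  shows "psi_step (O2, E2) (Ow, Ew) \<and> omega_inv O2 E2"
proof -
  define os where "os = LF Ow"
  have odd_O: "\<forall>f\<in>set os. odd (length f)" and sorted_O: "sorted_wrt (>) os"
    and even_E: "\<forall>e'\<in>set (e # es). even (length e')"
    using inv E by (auto simp: omega_inv_def os_def)
  have "os \<noteq> [] \<Longrightarrow> s < last os" using less by (simp add: last_factor_def os_def wlt_iff_less)
  then have "sorted_wrt (>) (os @ [s])" using sorted_O by (simp add: sorted_wrt_snoc)
  have odd_s: "odd (length s)" using is_ISF_odd_if_less[OF isf less] .
  then have odd_r: "odd (length r)" using is_ISF_even_left[OF isf] even_E by simp
  have "lyndon e" using E lyndon_LF[of e Ew] by simp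
  note lyn = is_ISF_lyndon[OF isf this]
  have sorted': "sorted_wrt (>) ((os @ [s]) @ [r])"
    using \<open>sorted_wrt (>) (os @ [s])\<close> lyn(3) sorted_wrt_snoc[of "(>)" "os @ [s]" r] by simp
  have LF_O2: "LF O2 = (os @ [s]) @ [r]"
    using lyn sorted' lyndon_LF[of _ Ow] unfolding O2_def os_def by (intro LF_eqI_strict) simp_all
  have "e < s" using lyn(5) by simp
  then have "\<forall>e'\<in>set (ts @ es). e' < s"
    using LF_Cons_less[OF E] is_ISF_remainder_less[OF isf \<open>lyndon e\<close> odd_s] by auto
  moreover have "\<forall>e'\<in>set (ts @ es). even (length e')"
    using is_ISF_ConsD(4)[OF isf] even_E by auto
  ultimately have below_s: "\<forall>e'\<in>set (LF E2). e' < s \<and> even (length e')"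
    unfolding E2_def LF_after_ISF[OF E isf] by blast
  show ?thesis
  proof
    show "psi_step (O2, E2) (Ow, Ew)"
      using psi_step_not_splittable[OF LF_O2[simplified] is_ISF_left_not_splittable[OF isf]]
        is_ISF_ConsD(1)[OF isf] arg_cong[OF E, of concat] unfolding E2_def os_def by simp
    show "omega_inv O2 E2"
      using odd_O odd_s odd_r sorted' below_s is_ISF_left_suffixes[OF isf]
      by (intro omega_invI_below[OF LF_O2, where b = s]) auto
  qed
qed

lemma last_factor_eq_Some_iff: "last_factor w = Some oh \<longleftrightarrow> (\<exists>os. LF w = os @ [oh])"
  by (cases "LF w" rule: rev_cases) (auto simp: last_factor_def)

lemma omega_step_inverse:
  fixes Ow Ew :: "'a::linorder list"
  assumes inv: "omega_inv Ow Ew" and step: "omega_step (Ow, Ew) (O2, E2)"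
  shows "psi_step (O2, E2) (Ow, Ew) \<and> omega_inv O2 E2"
proof -
  have "Ew \<noteq> []" using step by (simp add: omega_step_def)
  then obtain e es where E: "LF Ew = e # es" by (metis concat_LF concat.simps(1) neq_Nil_conv)
  let ?u = "last_factor Ow"
  have "(ext_lt_w ?u e \<and> O2 = Ow @ e \<and> E2 = concat es) \<or>
      (\<not> ext_lt_w ?u e \<and> (\<exists>r ts. is_ISF ?u e r ts \<and> E2 = concat (tl ts) @ concat es \<and>
         (ext_le_w ?u (hd ts) \<and> O2 = concat (butlast (LF Ow)) @ r @ hd ts @ the ?u \<or>
          w_lt_ext (hd ts) ?u \<and> O2 = Ow @ hd ts @ r)))"
    using step E unfolding omega_step_def Let_def by auto
  then show ?thesis
  proof (elim disjE conjE exE)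
    assume "ext_lt_w ?u e" "O2 = Ow @ e" "E2 = concat es"
    moreover obtain oh where "?u = Some oh" using \<open>ext_lt_w ?u e\<close> by (cases ?u) auto
    moreover obtain os where "LF Ow = os @ [oh]"
      using calculation by (auto simp: last_factor_eq_Some_iff)
    ultimately show ?thesis using omega_step_S_inverse[OF inv _ E] by (simp add: wlt_iff_less)
  next
    fix r ts assume "\<not> ext_lt_w ?u e" "is_ISF ?u e r ts" "E2 = concat (tl ts) @ concat es"
      "ext_le_w ?u (hd ts)" "O2 = concat (butlast (LF Ow)) @ r @ hd ts @ the ?u"
    moreover obtain oh where "?u = Some oh" using \<open>ext_le_w ?u (hd ts)\<close> by (cases ?u) auto
    moreover obtain os where "LF Ow = os @ [oh]"
      using calculation by (auto simp: last_factor_eq_Some_iff)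
    moreover have "ts = hd ts # tl ts" using \<open>is_ISF ?u e r ts\<close> by (simp add: is_ISF_def)
    ultimately show ?thesis
      using omega_step_P_inverse[OF inv _ E, of os oh r "hd ts" "tl ts"]
      by (simp add: wlt_iff_less wle_iff_less_eq)
  next
    fix r ts assume "is_ISF ?u e r ts" "E2 = concat (tl ts) @ concat es"
      "w_lt_ext (hd ts) ?u" "O2 = Ow @ hd ts @ r"
    moreover have "ts = hd ts # tl ts" using \<open>is_ISF ?u e r ts\<close> by (simp add: is_ISF_def)
    ultimately show ?thesis using omega_step_F_inverse[OF inv E, of r "hd ts" "tl ts"] by simp
  qed
qed


lemma We_even_factors:
  assumes "w \<in> We n" and "even (length w)"
  shows "\<forall>f\<in>set (LF w). even (length f)"
proof -
  have "length (filter (\<lambda>f. odd (length f)) (LF w)) \<le> 1"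
    "even (length (filter (\<lambda>f. odd (length f)) (LF w)))"
    using assms even_length_concat_iff[of "LF w"] by (auto simp: We_def)
  then have "filter (\<lambda>f. odd (length f)) (LF w) = []"
    by (cases "filter (\<lambda>f. odd (length f)) (LF w)") auto
  then show ?thesis by (auto simp: filter_empty_conv)
qed

lemma We_odd_letter:
  assumes "w \<in> We n" and "odd (length w)"
  obtains a where "filter (\<lambda>f. length f = 1) (LF w) = [[a]]"
proof -
  have factors: "\<forall>f\<in>set (LF w). even (length f) \<or> length f = 1"
    and "length (filter (\<lambda>f. odd (length f)) (LF w)) \<le> 1"
    "odd (length (filter (\<lambda>f. odd (length f)) (LF w)))"
    using assms even_length_concat_iff[of "LF w"] by (auto simp: We_def)
  then obtain x where x: "filter (\<lambda>f. odd (length f)) (LF w) = [x]"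
    by (cases "filter (\<lambda>f. odd (length f)) (LF w)") auto
  moreover have "filter (\<lambda>f. length f = 1) (LF w) = filter (\<lambda>f. odd (length f)) (LF w)"
    using factors by (intro filter_cong) auto
  moreover have "length x = 1" using x factors by (metis filter_eq_ConsD in_set_conv_decomp)
  ultimately show ?thesis using that by (metis length_0_conv length_Suc_conv One_nat_def)
qed

lemma omega_inv_init:
  fixes w :: "'a::linorder list"
  assumes w: "w \<in> We n"
  shows "omega_inv (fst (omega_init w)) (snd (omega_init w))"
proof (cases "odd (length w)")
  case False
  have "LF [] = ([] :: 'a list list)" by (rule LF_eqI) (simp add: lyndon_factorization_iff)
  then show ?thesis using False We_even_factors[OF w] by (simp add: omega_init_def omega_inv_def)
next
  case True
  then obtain a where a: "filter (\<lambda>f. length f = 1) (LF w) = [[a]]"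
    using We_odd_letter[OF w] by blast
  let ?E = "concat (filter (\<lambda>f. length f \<noteq> 1) (LF w))"
  have "LF [a] = [[a]]" by (rule LF_eqI) (simp add: lyndon_factorization_iff)
  moreover have "LF ?E = filter (\<lambda>f. length f \<noteq> 1) (LF w)"
    using lyndon_LF[of _ w] sorted_wrt_filter[OF sorted_LF[of w]]
    by (intro LF_eqI) (auto simp: lyndon_factorization_iff)
  moreover have "\<forall>f\<in>set (filter (\<lambda>f. length f \<noteq> 1) (LF w)). even (length f)"
    using w by (auto simp: We_def)
  moreover have "\<not> min_proper_suffix [a] s" for s by (simp add: min_proper_suffix_def)
  ultimately show ?thesis using True a by (simp add: omega_init_def omega_inv_def)
qed

lemma omega_reach_inv: "omega_reach w S \<Longrightarrow> w \<in> We n \<Longrightarrow> omega_inv (fst S) (snd S)"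
proof (induct rule: omega_reach.induct)
  case init
  then show ?case by (rule omega_inv_init)
next
  case (step S1 S2)
  then show ?case using omega_step_inverse[of "fst S1" "snd S1" "fst S2" "snd S2"] by simp
qed

theorem lemma4p24:
  fixes w :: "'a::{linorder,finite} list"
    and O1 E1 O2 E2 :: "'a list"
  assumes "w \<in> We n"
    and "omega_reach w (O1, E1)"
    and "omega_step (O1, E1) (O2, E2)"
  shows "psi_step (O2, E2) (O1, E1)"
proof -
  have "omega_inv O1 E1" using omega_reach_inv[OF assms(2,1)] by simp
  then show ?thesis using omega_step_inverse assms(3) by blast
qed

end
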